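(* Let $\mathcal X$ be a subset of the nonzero elements of a field and let $f:\mathcal X\to\mathcal X$ be such that the map $$S:\mathcal X\times\mathcal X\to\mathcal X\times\mathcal X,\qquad S(x,y)=(u,v)=\Big(x\,\frac{f(y)}{f(xy)},\;xy\Big)$$ is well defined, and suppose $f(u)f(v)=f(x)$ for all $x,y\in\mathcal X$, where $(u,v)=S(x,y)$. Then $S$ is a pentagon map.
   Context: For a set $Y$ and $S:Y\times Y\to Y\times Y$, define on $Y^3$: $S_{12}=S\times\mathrm{id}_Y$, $S_{23}=\mathrm{id}_Y\times S$, $S_{13}(y_1,y_2,y_3)=(p,y_2,q)$ with $(p,q)=S(y_1,y_3)$. $S$ is a pentagon map if $S_{12}\circ S_{13}\circ S_{23}=S_{23}\circ S_{12}$ (rightmost applied first). *)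

theory Defs
  imports Main
begin

definition S12 :: "('a \<times> 'a \<Rightarrow> 'a \<times> 'a) \<Rightarrow> 'a \<times> 'a \<times> 'a \<Rightarrow> 'a \<times> 'a \<times> 'a" where
  "S12 S = (\<lambda>(y1, y2, y3). (fst (S (y1, y2)), snd (S (y1, y2)), y3))"

definition S23 :: "('a \<times> 'a \<Rightarrow> 'a \<times> 'a) \<Rightarrow> 'a \<times> 'a \<times> 'a \<Rightarrow> 'a \<times> 'a \<times> 'a" where
  "S23 S = (\<lambda>(y1, y2, y3). (y1, fst (S (y2, y3)), snd (S (y2, y3))))"

definition S13 :: "('a \<times> 'a \<Rightarrow> 'a \<times> 'a) \<Rightarrow> 'a \<times> 'a \<times> 'a \<Rightarrow> 'a \<times> 'a \<times> 'a" where
  "S13 S = (\<lambda>(y1, y2, y3). (fst (S (y1, y3)), y2, snd (S (y1, y3))))"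

definition pentagon_map :: "'a set \<Rightarrow> ('a \<times> 'a \<Rightarrow> 'a \<times> 'a) \<Rightarrow> bool" where
  "pentagon_map Y S \<longleftrightarrow>
     (\<forall>x\<in>Y. \<forall>y\<in>Y. S (x, y) \<in> Y \<times> Y) \<and>
     (\<forall>y1\<in>Y. \<forall>y2\<in>Y. \<forall>y3\<in>Y.
        S12 S (S13 S (S23 S (y1, y2, y3))) = S23 S (S12 S (y1, y2, y3)))"

end

theory Submission
  imports Defs
begin

text \<open>Writing \<open>S (x, y) = (x \<cdot> y, x * y)\<close> with \<open>x \<cdot> y = x f(y) / f(xy)\<close>, the second
  components of the pentagon equation agree by associativity, and the first ones reduce to
  \<open>f(y \<cdot> z) = f y / f(yz)\<close> and \<open>f((x \<cdot> yz)(y \<cdot> z)) = f(xy) / f(xyz)\<close>, both instances of the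
  hypothesis \<open>f(u) f(v) = f(x)\<close> after noting \<open>(x \<cdot> yz)(y \<cdot> z) = xy \<cdot> z\<close>.\<close>

lemma pentagon_mapI:
  assumes "\<And>x y. x \<in> Y \<Longrightarrow> y \<in> Y \<Longrightarrow> S (x, y) \<in> Y \<times> Y"
    and "\<And>x y z. x \<in> Y \<Longrightarrow> y \<in> Y \<Longrightarrow> z \<in> Y \<Longrightarrow>
      S (fst (S (x, snd (S (y, z)))), fst (S (y, z))) = (fst (S (x, y)), fst (S (snd (S (x, y)), z)))
      \<and> snd (S (x, snd (S (y, z)))) = snd (S (snd (S (x, y)), z))"
  shows "pentagon_map Y S"
  using assms unfolding pentagon_map_def S12_def S13_def S23_def by (simp add: case_prod_beta)

lemma pentagon_components_of_ratio_map:
  fixes X :: "'a::field set" and f :: "'a \<Rightarrow> 'a"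
  assumes nonzero: "0 \<notin> X"
    and f_maps: "\<forall>x\<in>X. f x \<in> X"
    and closed: "\<forall>x\<in>X. \<forall>y\<in>X. x * f y / f (x * y) \<in> X \<and> x * y \<in> X"
    and cond: "\<forall>x\<in>X. \<forall>y\<in>X. f (x * f y / f (x * y)) * f (x * y) = f x"
    and x: "x \<in> X" and y: "y \<in> X" and z: "z \<in> X"
  defines "a \<equiv> x * f (y * z) / f (x * (y * z))" and "b \<equiv> y * f z / f (y * z)"
  shows "a * f b / f (a * b) = x * f y / f (x * y)"
    and "a * b = x * y * f z / f (x * y * z)"
proof -
  have f_nonzero: "f w \<noteq> 0" if "w \<in> X" for w
    using f_maps nonzero that by force
  have xy: "x * y \<in> X" and yz: "y * z \<in> X" and xyz: "x * y * z \<in> X"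
    using closed x y z by (auto simp: mult.assoc)
  show ab: "a * b = x * y * f z / f (x * y * z)"
    using f_nonzero[OF yz] by (simp add: a_def b_def field_simps)
  have "f (a * b) * f (x * y * z) = f (x * y)"
    unfolding ab using cond xy z by auto
  then have f_ab: "f (a * b) = f (x * y) / f (x * y * z)"
    using f_nonzero[OF xyz] by (simp add: field_simps)
  have "f b * f (y * z) = f y"
    unfolding b_def using cond y z by auto
  then have f_b: "f b = f y / f (y * z)"
    using f_nonzero[OF yz] by (simp add: field_simps)
  have "a * f b / f (a * b) = a * (f y / f (y * z)) / (f (x * y) / f (x * y * z))"
    by (simp only: f_ab f_b)
  also have "\<dots> = x * f y / f (x * y)"
    unfolding a_def using f_nonzero[OF yz] f_nonzero[OF xyz] f_nonzero[OF xy]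
    by (simp add: field_simps mult.assoc)
  finally show "a * f b / f (a * b) = x * f y / f (x * y)" .
qed

theorem mainTheorem3:
  fixes X :: "'a::field set" and f :: "'a \<Rightarrow> 'a"
  assumes nonzero: "0 \<notin> X"
    and f_maps: "\<forall>x\<in>X. f x \<in> X"
    and well_defined: "\<forall>x\<in>X. \<forall>y\<in>X. x * f y / f (x * y) \<in> X \<and> x * y \<in> X"
    and cond: "\<forall>x\<in>X. \<forall>y\<in>X. f (x * f y / f (x * y)) * f (x * y) = f x"
  shows "pentagon_map X (\<lambda>(x, y). (x * f y / f (x * y), x * y))"
proof (rule pentagon_mapI, goal_cases)
  case (1 x y)
  then show ?case
    using well_defined by auto
next
  case (2 x y z)
  then show ?case
    using pentagon_components_of_ratio_map[OF assms 2]
    by (simp only: case_prod_conv fst_conv snd_conv prod.inject mult.assoc simp_thms)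
qed

end
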